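(* Let $N=2K+1$ with $K\in\mathbb N$, and let real numbers $x_{N,1}<\dots<x_{N,N}$ satisfy $x_{N,k}\in[-2,-1]$ and $x_{N,2K+2-k}=-x_{N,k}$ for all $k\le K$, and $x_{N,K+1}=0$. Let $\lambda_{N,K+1}=\frac12$ and $\lambda_{N,k}=\frac1{4K}$ for $k\neq K+1$. Let $V_{N,1},\dots,V_{N,N}$ solve the deterministic system $$\frac{d}{dt}V_{N,k}(t)=\sum_{j\neq k}\frac{2(\lambda_{N,k}+\lambda_{N,j})}{V_{N,k}(t)-V_{N,j}(t)},\qquad V_{N,k}(0)=x_{N,k},$$ and let $\alpha_{N,t}=\sum_{k=1}^N\lambda_{N,k}\delta_{V_{N,k}(t)}$. Then there exists $T_0>0$ such that the sequence $\{\alpha_{N,\cdot}\}_{N}$ (over $N=2K+1$, $K\in\mathbb N$) is tight in $\mathcal M(T_0)$.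
   Context: $\mathcal M(T)=C([0,T],\mathcal P(\mathbb R))$ with the topology of uniform convergence, where $\mathcal P(\mathbb R)$ is the space of probability measures on $\mathbb R$ with the topology of weak convergence. A sequence in $\mathcal M(T)$ is tight if it has a subsequence converging in distribution (for deterministic elements: a convergent subsequence). *)

theory Defs
  imports "HOL-Probability.Probability"
begin

definition lam :: "nat \<Rightarrow> nat \<Rightarrow> real" where
  "lam K k = (if k = K + 1 then 1/2 else 1 / (4 * real K))"

definition emp_measure :: "nat \<Rightarrow> (nat \<Rightarrow> real) \<Rightarrow> real measure" where
  "emp_measure K v = measure_of UNIV (sets borel)
     (\<lambda>A. ennreal (\<Sum>k = 1..2*K+1. lam K k * indicator A (v k)))"

text \<open>Levy metric on probability measures on the real line; it metrizes weak convergence.\<close>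
definition levy_dist :: "real measure \<Rightarrow> real measure \<Rightarrow> real" where
  "levy_dist M M' = Inf {e. e > 0 \<and> (\<forall>x. cdf M (x - e) - e \<le> cdf M' x \<and> cdf M' x \<le> cdf M (x + e) + e)}"

text \<open>The space M(T) = C([0,T], P(R)), P(R) with the weak topology (via the Levy metric).\<close>
definition M_space :: "real \<Rightarrow> (real \<Rightarrow> real measure) set" where
  "M_space T = {\<alpha>. (\<forall>t\<in>{0..T}. real_distribution (\<alpha> t)) \<and>
     (\<forall>t\<in>{0..T}. \<forall>e>0. \<exists>d>0. \<forall>s\<in>{0..T}. \<bar>s - t\<bar> < d \<longrightarrow> levy_dist (\<alpha> s) (\<alpha> t) < e)}"

definition M_conv :: "real \<Rightarrow> (nat \<Rightarrow> real \<Rightarrow> real measure) \<Rightarrow> (real \<Rightarrow> real measure) \<Rightarrow> bool" where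
  "M_conv T \<alpha>s \<alpha> \<longleftrightarrow> \<alpha> \<in> M_space T \<and>
     (\<forall>e>0. \<exists>n0. \<forall>n\<ge>n0. \<forall>t\<in>{0..T}. levy_dist (\<alpha>s n t) (\<alpha> t) < e)"

text \<open>Tightness of a deterministic sequence in M(T): it has a convergent subsequence.\<close>
definition M_tight :: "real \<Rightarrow> (nat \<Rightarrow> real \<Rightarrow> real measure) \<Rightarrow> bool" where
  "M_tight T \<alpha>s \<longleftrightarrow> (\<forall>n. \<alpha>s n \<in> M_space T) \<and>
     (\<exists>r \<alpha>. strict_mono r \<and> M_conv T (\<alpha>s \<circ> r) \<alpha>)"

end

theory Submission
  imports Defs "HOL-Complex_Analysis.Great_Picard"
begin

text \<open>
  The reflected configuration \<open>k \<mapsto> - V (2K+2-k)\<close> solves the same system with the same initial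
  data. Since the interaction \<open>1 / (u - v)\<close> is decreasing, the sum of squared distances between the
  two solutions cannot grow, so the configuration stays symmetric and the heavy middle particle
  stays at \<open>0\<close>. Splitting every weight into the uniform part \<open>1/(4K)\<close> and the extra mass
  \<open>1/2 - 1/(4K)\<close> of the middle particle, only the uniform part moves, and antisymmetrising the
  double sum in \<open>d/dt \<Sum>\<^sub>k \<lambda>\<^sub>k f (V\<^sub>k)\<close> bounds it by \<open>(2K+1)/(2K) L \<le> 3L/2\<close> whenever \<open>f'\<close> is
  \<open>L\<close>-Lipschitz, uniformly in \<open>K\<close>. For smoothed indicators at scale \<open>\<epsilon>\<close> this gives
  \<open>F\<^sub>t(a) \<le> F\<^sub>s(a + \<epsilon>) + 24 \<bar>t - s\<bar> / \<epsilon>\<^sup>2\<close> for the distribution functions: the empirical measures are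
  equicontinuous in time for the Levy metric and uniformly tight. An Arzela-Ascoli argument
  concludes: a diagonal subsequence converging on a rational grid is uniformly Levy-Cauchy, and its
  limit is the infimum of the shifted distribution functions.
\<close>

section \<open>Smooth steps\<close>

lemma has_real_derivative_if_quadratic_remainder:
  fixes g :: "real \<Rightarrow> real"
  assumes "\<And>y. \<bar>g y - g x - D * (y - x)\<bar> \<le> C * (y - x)^2"
  shows "(g has_real_derivative D) (at x)"
proof -
  have bound: "\<bar>(g (x + h) - g x) / h - D\<bar> \<le> C * \<bar>h\<bar>" if "h \<noteq> 0" for h
  proof -
    have "(g (x + h) - g x) / h - D = (g (x + h) - g x - D * h) / h"
      using that by (simp add: field_simps)
    then have "\<bar>(g (x + h) - g x) / h - D\<bar> = \<bar>g (x + h) - g x - D * h\<bar> / \<bar>h\<bar>"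
      by (simp add: abs_divide)
    also have "\<dots> \<le> C * h^2 / \<bar>h\<bar>"
      using assms[of "x + h"] by (intro divide_right_mono) auto
    also have "\<dots> = C * \<bar>h\<bar>"
      using that by (simp add: power2_eq_square abs_mult_self_eq[symmetric, of h] del: abs_mult_self_eq)
    finally show ?thesis .
  qed
  have "((\<lambda>h. (g (x + h) - g x) / h - D) \<longlongrightarrow> 0) (at 0)"
  proof (rule Lim_null_comparison)
    show "\<forall>\<^sub>F h in at 0. norm ((g (x + h) - g x) / h - D) \<le> C * \<bar>h\<bar>"
      unfolding eventually_at_filter using bound by (intro always_eventually) simp
    show "((\<lambda>h. C * \<bar>h\<bar>) \<longlongrightarrow> 0) (at 0)"
      by (rule tendsto_eq_intros | simp)+
  qed
  then show ?thesis
    unfolding DERIV_def by (rule LIM_zero_cancel)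
qed

definition pos_sq :: "real \<Rightarrow> real" where
  "pos_sq y = (max 0 y)^2"

lemma pos_sq_has_derivative: "(pos_sq has_real_derivative 2 * max 0 x) (at x)"
proof (rule has_real_derivative_if_quadratic_remainder[where C = 1])
  fix y
  let ?r = "pos_sq y - pos_sq x - 2 * max 0 x * (y - x)"
  consider "0 \<le> x" "0 \<le> y" | "0 \<le> x" "y < 0" | "x < 0" "0 \<le> y" | "x < 0" "y < 0"
    by linarith
  then show "\<bar>?r\<bar> \<le> 1 * (y - x)^2"
  proof cases
    case 1
    then have "?r = (y - x)^2"
      by (simp add: pos_sq_def power2_eq_square algebra_simps)
    then show ?thesis by simp
  next
    case 2
    then have "?r = x * (x - 2 * y)"
      by (simp add: pos_sq_def power2_eq_square algebra_simps)
    moreover have "0 \<le> x * (x - 2 * y)"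
      using 2 by simp
    moreover have "x * (x - 2 * y) \<le> (y - x)^2"
      by (simp add: power2_eq_square algebra_simps)
    ultimately show ?thesis by simp
  next
    case 3
    then have "?r = y^2"
      by (simp add: pos_sq_def)
    moreover have "y^2 \<le> (y - x)^2"
      using 3 by (intro power_mono) auto
    ultimately show ?thesis by simp
  next
    case 4
    then show ?thesis
      by (simp add: pos_sq_def)
  qed
qed

text \<open>The spline equal to \<open>1 - 2u\<^sup>2\<close> on \<open>[0, 1/2]\<close> and to \<open>2(1 - u)\<^sup>2\<close> on \<open>[1/2, 1]\<close>.\<close>
definition cutoff :: "real \<Rightarrow> real" where
  "cutoff u = 1 - 2 * pos_sq u + 4 * pos_sq (u - 1/2) - 2 * pos_sq (u - 1)"

definition cutoff' :: "real \<Rightarrow> real" where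
  "cutoff' u = - 4 * max 0 u + 8 * max 0 (u - 1/2) - 4 * max 0 (u - 1)"

lemma pos_sq_shift_has_derivative:
  "((\<lambda>u. pos_sq (u - c)) has_real_derivative 2 * max 0 (x - c)) (at x)"
  using DERIV_chain2[OF pos_sq_has_derivative DERIV_diff[OF DERIV_ident DERIV_const]] by simp

lemma cutoff_has_derivative: "(cutoff has_real_derivative cutoff' u) (at u)"
proof -
  have "(cutoff has_real_derivative
      0 - 2 * (2 * max 0 u) + 4 * (2 * max 0 (u - 1/2)) - 2 * (2 * max 0 (u - 1))) (at u)"
    unfolding cutoff_def
    by (intro DERIV_diff DERIV_add DERIV_cmult DERIV_const pos_sq_has_derivative pos_sq_shift_has_derivative)
  then show ?thesis
    by (simp add: cutoff'_def)
qed

lemma cutoff'_lipschitz: "\<bar>cutoff' a - cutoff' b\<bar> \<le> 16 * \<bar>a - b\<bar>"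
proof -
  have max0: "\<bar>max 0 p - max 0 q\<bar> \<le> \<bar>a - b\<bar>" if "p - q = a - b" for p q :: real
    using that by (simp add: max_def)
  define d1 d2 d3 where "d1 = max 0 a - max 0 b" and "d2 = max 0 (a - 1/2) - max 0 (b - 1/2)"
    and "d3 = max 0 (a - 1) - max 0 (b - 1)"
  have "cutoff' a - cutoff' b = - 4 * d1 + 8 * d2 - 4 * d3"
    by (simp add: cutoff'_def d1_def d2_def d3_def algebra_simps)
  moreover have "\<bar>d1\<bar> \<le> \<bar>a - b\<bar>" "\<bar>d2\<bar> \<le> \<bar>a - b\<bar>" "\<bar>d3\<bar> \<le> \<bar>a - b\<bar>"
    unfolding d1_def d2_def d3_def by (rule max0, simp)+
  ultimately show ?thesis
    unfolding abs_le_iff by auto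
qed

lemma cutoff_nonpos: "u \<le> 0 \<Longrightarrow> cutoff u = 1"
  by (simp add: cutoff_def pos_sq_def)

lemma cutoff_ge_1: "1 \<le> u \<Longrightarrow> cutoff u = 0"
  by (simp add: cutoff_def pos_sq_def power2_eq_square algebra_simps)

lemma cutoff_bounds: "0 \<le> cutoff u \<and> cutoff u \<le> 1"
proof -
  consider "u \<le> 0" | "0 \<le> u" "u \<le> 1/2" | "1/2 \<le> u" "u \<le> 1" | "1 \<le> u"
    by linarith
  then show ?thesis
  proof cases
    case 2
    then have "cutoff u = 1 - 2 * u^2" "u^2 \<le> 1/4"
      using power_mono[of u "1/2" 2] by (simp_all add: cutoff_def pos_sq_def power2_eq_square)
    then show ?thesis by simp
  next
    case 3
    then have "cutoff u = 2 * (1 - u)^2" "(1 - u)^2 \<le> 1/4"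
      using power_mono[of "1 - u" "1/2" 2]
      by (simp_all add: cutoff_def pos_sq_def power2_eq_square algebra_simps)
    then show ?thesis by simp
  qed (simp_all add: cutoff_nonpos cutoff_ge_1)
qed

lemma smooth_step_between_indicators:
  fixes a \<epsilon> :: real
  assumes "0 < \<epsilon>"
  obtains f f' :: "real \<Rightarrow> real"
  where "\<And>y. (f has_real_derivative f' y) (at y)"
    and "\<And>p q. \<bar>f' p - f' q\<bar> \<le> 16 / \<epsilon>^2 * \<bar>p - q\<bar>"
    and "\<And>y. indicator {..a} y \<le> f y" and "\<And>y. f y \<le> indicator {..a + \<epsilon>} y"
proof
  fix y
  show "((\<lambda>y. cutoff ((y - a) / \<epsilon>)) has_real_derivative cutoff' ((y - a) / \<epsilon>) / \<epsilon>) (at y)"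
    using DERIV_chain2[OF cutoff_has_derivative DERIV_cdivide[OF DERIV_diff[OF DERIV_ident DERIV_const]]]
    by simp
  show "indicator {..a} y \<le> cutoff ((y - a) / \<epsilon>)"
    using assms cutoff_bounds[of "(y - a) / \<epsilon>"]
    by (auto simp: cutoff_nonpos divide_nonpos_pos indicator_def)
  show "cutoff ((y - a) / \<epsilon>) \<le> indicator {..a + \<epsilon>} y"
    using assms cutoff_bounds[of "(y - a) / \<epsilon>"]
    by (auto simp: cutoff_ge_1 indicator_def field_simps)
next
  fix p q
  have "\<bar>cutoff' ((p - a) / \<epsilon>) / \<epsilon> - cutoff' ((q - a) / \<epsilon>) / \<epsilon>\<bar>
      = \<bar>cutoff' ((p - a) / \<epsilon>) - cutoff' ((q - a) / \<epsilon>)\<bar> / \<epsilon>"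
    using assms by (simp add: abs_divide flip: diff_divide_distrib)
  also have "\<dots> \<le> 16 * \<bar>(p - a) / \<epsilon> - (q - a) / \<epsilon>\<bar> / \<epsilon>"
    using assms by (intro divide_right_mono cutoff'_lipschitz) auto
  also have "\<dots> = 16 / \<epsilon>^2 * \<bar>p - q\<bar>"
    using assms by (simp add: abs_divide power2_eq_square flip: diff_divide_distrib)
  finally show "\<bar>cutoff' ((p - a) / \<epsilon>) / \<epsilon> - cutoff' ((q - a) / \<epsilon>) / \<epsilon>\<bar> \<le> 16 / \<epsilon>^2 * \<bar>p - q\<bar>" .
qed

section \<open>Weighted empirical measures\<close>

lemma lam_nonneg: "0 \<le> lam K k"
  by (simp add: lam_def)

lemma sum_lam:
  assumes "1 \<le> K"
  shows "(\<Sum>k = 1..2*K+1. lam K k) = 1"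
proof -
  have mid: "K + 1 \<in> {1..2*K+1}"
    by simp
  have "(\<Sum>k = 1..2*K+1. lam K k) = lam K (K + 1) + (\<Sum>k \<in> {1..2*K+1} - {K + 1}. lam K k)"
    by (rule sum.remove[OF finite_atLeastAtMost mid])
  also have "(\<Sum>k \<in> {1..2*K+1} - {K + 1}. lam K k) = (\<Sum>k \<in> {1..2*K+1} - {K + 1}. 1 / (4 * real K))"
    by (rule sum.cong) (auto simp: lam_def)
  also have "\<dots> = real (2 * K) / (4 * real K)"
    using mid by (simp add: card_Diff_singleton)
  also have "\<dots> = 1/2"
    using assms by (simp add: field_simps)
  finally show ?thesis
    by (simp add: lam_def)
qed

lemma emeasure_emp_measure:
  assumes "A \<in> sets borel"
  shows "emeasure (emp_measure K v) A = ennreal (\<Sum>k = 1..2*K+1. lam K k * indicator A (v k))"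
proof -
  let ?\<mu> = "\<lambda>A. ennreal (\<Sum>k = 1..2*K+1. lam K k * indicator A (v k))"
  have \<mu>_eq: "?\<mu> A = (\<Sum>k = 1..2*K+1. ennreal (lam K k) * indicator A (v k))" for A
    by (subst sum_ennreal[symmetric]) (auto simp: lam_nonneg ennreal_mult ennreal_indicator)
  have "countably_additive (sets borel) ?\<mu>"
  proof (unfold countably_additive_def, intro allI impI)
    fix A :: "nat \<Rightarrow> real set"
    assume "range A \<subseteq> sets borel" "disjoint_family A" "\<Union> (range A) \<in> sets borel"
    have "(\<Sum>i. ?\<mu> (A i)) = (\<Sum>k = 1..2*K+1. \<Sum>i. ennreal (lam K k) * indicator (A i) (v k))"
      unfolding \<mu>_eq by (rule suminf_sum) (rule summableI)
    also have "\<dots> = ?\<mu> (\<Union>i. A i)"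
      unfolding \<mu>_eq using suminf_indicator[OF \<open>disjoint_family A\<close>] by simp
    finally show "(\<Sum>i. ?\<mu> (A i)) = ?\<mu> (\<Union> (range A))" .
  qed
  moreover have "sigma_algebra UNIV (sets borel)"
    by (metis sets.sigma_algebra_axioms space_borel)
  ultimately show ?thesis
    unfolding emp_measure_def
    by (intro emeasure_measure_of_sigma assms) (auto simp: positive_def)
qed

lemma sets_emp_measure: "sets (emp_measure K v) = sets borel"
proof -
  have "sets (emp_measure K v) = sigma_sets UNIV (sets borel)"
    unfolding emp_measure_def by (rule sets_measure_of) simp
  then show ?thesis
    using sets.sigma_sets_eq[of borel] by simp
qed

lemma real_distribution_emp_measure:
  assumes "1 \<le> K"
  shows "real_distribution (emp_measure K v)"
proof -
  have "emeasure (emp_measure K v) UNIV = ennreal (\<Sum>k = 1..2*K+1. lam K k * indicator UNIV (v k))"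
    by (rule emeasure_emp_measure) simp
  also have "\<dots> = 1"
    by (simp only: indicator_UNIV mult_1_right sum_lam[OF assms] ennreal_1)
  finally have "prob_space (emp_measure K v)"
    by (intro prob_spaceI) (simp add: emp_measure_def)
  then show ?thesis
    by (simp add: real_distribution_def real_distribution_axioms_def sets_emp_measure)
qed

lemma cdf_emp_measure:
  "cdf (emp_measure K v) y = (\<Sum>k = 1..2*K+1. lam K k * indicator {..y} (v k))"
proof -
  have "cdf (emp_measure K v) y = enn2real (emeasure (emp_measure K v) {..y})"
    by (simp add: cdf_def measure_def)
  also have "\<dots> = (\<Sum>k = 1..2*K+1. lam K k * indicator {..y} (v k))"
    by (simp only: emeasure_emp_measure[OF atMost_borel])
      (intro enn2real_ennreal sum_nonneg mult_nonneg_nonneg lam_nonneg indicator_pos_le)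
  finally show ?thesis .
qed

section \<open>Compactness in \<open>M(T)\<close>\<close>

definition levy_close :: "(real \<Rightarrow> real) \<Rightarrow> (real \<Rightarrow> real) \<Rightarrow> real \<Rightarrow> bool" where
  "levy_close F G e \<longleftrightarrow> (\<forall>x. F (x - e) - e \<le> G x \<and> G x \<le> F (x + e) + e)"

lemma levy_close_sym: "levy_close F G e \<Longrightarrow> levy_close G F e"
  unfolding levy_close_def by (metis add_diff_cancel diff_add_cancel diff_le_eq)

lemma levy_close_trans: "levy_close F G e \<Longrightarrow> levy_close G H d \<Longrightarrow> levy_close F H (e + d)"
  unfolding levy_close_def
proof (intro allI conjI)
  fix x
  assume FG: "\<forall>x. F (x - e) - e \<le> G x \<and> G x \<le> F (x + e) + e"
    and GH: "\<forall>x. G (x - d) - d \<le> H x \<and> H x \<le> G (x + d) + d"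
  show "F (x - (e + d)) - (e + d) \<le> H x"
    using FG[rule_format, of "x - d"] GH[rule_format, of x] by (simp add: algebra_simps)
  show "H x \<le> F (x + (e + d)) + (e + d)"
    using FG[rule_format, of "x + d"] GH[rule_format, of x] by (simp add: algebra_simps)
qed

lemma levy_dist_less:
  assumes "levy_close (cdf M) (cdf M') e" "0 < e" "e < d"
  shows "levy_dist M M' < d"
proof -
  let ?S = "{e. 0 < e \<and> (\<forall>x. cdf M (x - e) - e \<le> cdf M' x \<and> cdf M' x \<le> cdf M (x + e) + e)}"
  have "Inf ?S \<le> e"
    using assms(1,2) by (intro cInf_lower bdd_belowI[of _ 0]) (auto simp: levy_close_def)
  then show ?thesis
    using assms(3) unfolding levy_dist_def by simp
qed

lemma (in real_distribution) mono_cdf: "mono (cdf M)"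
  by (intro monoI cdf_nondecreasing)

lemma (in real_distribution) cdf_bounds: "0 \<le> cdf M y \<and> cdf M y \<le> 1"
  by (simp add: cdf_nonneg cdf_bounded_prob)

lemma grid_point_below:
  fixes x h :: real
  assumes "0 < h" "0 \<le> x"
  obtains i :: nat where "real i * h \<le> x" "x < real i * h + h"
proof
  define k where "k = nat \<lfloor>x / h\<rfloor>"
  have "0 \<le> x / h"
    using assms by simp
  then have "real k \<le> x / h" "x / h < real k + 1"
    unfolding k_def by linarith+
  then show "real k * h \<le> x" "x < real k * h + h"
    using mult_right_mono[of "real k" "x / h" h] mult_strict_right_mono[of "x / h" "real k + 1" h] assms
    by (simp_all add: distrib_right)
qed

lemma levy_close_of_grid:
  fixes A B :: "real \<Rightarrow> real"
  assumes "mono A" "mono B"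
    and A_bounds: "\<And>y. 0 \<le> A y \<and> A y \<le> 1" and B_bounds: "\<And>y. 0 \<le> B y \<and> B y \<le> 1"
    and A_tails: "A (- R) \<le> e" "1 - e \<le> A R" and B_tails: "B (- R) \<le> e" "1 - e \<le> B R"
    and h: "0 < h" "h \<le> e" and J: "R + h \<le> - R + real J * h"
    and grid: "\<And>j. j \<le> J \<Longrightarrow> \<bar>A (- R + real j * h) - B (- R + real j * h)\<bar> \<le> e"
  shows "levy_close A B e"
  unfolding levy_close_def
proof (intro allI)
  fix y
  have mA: "a \<le> b \<Longrightarrow> A a \<le> A b" and mB: "a \<le> b \<Longrightarrow> B a \<le> B b" for a b
    using \<open>mono A\<close> \<open>mono B\<close> by (simp_all add: monoD)
  consider "y < - R" | "R \<le> y" | "- R \<le> y" "y < R"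
    by linarith
  then show "A (y - e) - e \<le> B y \<and> B y \<le> A (y + e) + e"
  proof cases
    case 1
    then have "A (y - e) \<le> A (- R)" "B y \<le> B (- R)"
      using h by (auto intro: mA mB)
    then show ?thesis
      using A_bounds[of "y + e"] B_bounds[of y] A_tails B_tails by linarith
  next
    case 2
    then have "A R \<le> A (y + e)" "B R \<le> B y"
      using h by (auto intro: mA mB)
    then show ?thesis
      using A_bounds[of "y - e"] B_bounds[of y] A_tails B_tails by linarith
  next
    case 3
    then obtain k where lo: "- R + real k * h \<le> y" and hi: "y < - R + real (k + 1) * h"
      using grid_point_below[of h "y + R"] h by (auto simp: algebra_simps)
    then have "real (k + 1) * h < real J * h"
      using J 3 by (simp add: algebra_simps)
    then have "k + 1 \<le> J"
      using h by (simp add: mult_less_cancel_right)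
    then have "\<bar>A (- R + real k * h) - B (- R + real k * h)\<bar> \<le> e"
      "\<bar>A (- R + real (k + 1) * h) - B (- R + real (k + 1) * h)\<bar> \<le> e"
      by (intro grid; simp)+
    moreover have "A (y - e) \<le> A (- R + real k * h)" "B (- R + real k * h) \<le> B y"
      "A (- R + real (k + 1) * h) \<le> A (y + e)" "B y \<le> B (- R + real (k + 1) * h)"
      using lo hi h by (auto intro!: mA mB simp: algebra_simps)
    ultimately show ?thesis
      by (simp only: abs_le_iff) linarith
  qed
qed

lemma uniformly_cauchy_on_finite:
  fixes f :: "nat \<Rightarrow> 'a \<Rightarrow> real"
  assumes "finite S" and "\<And>q. q \<in> S \<Longrightarrow> convergent (\<lambda>n. f n q)" and "0 < e"
  obtains N where "\<And>n m q. N \<le> n \<Longrightarrow> N \<le> m \<Longrightarrow> q \<in> S \<Longrightarrow> \<bar>f n q - f m q\<bar> < e"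
proof -
  have "\<forall>q\<in>S. \<forall>\<^sub>F N in sequentially. \<forall>n\<ge>N. \<forall>m\<ge>N. \<bar>f n q - f m q\<bar> < e"
  proof
    fix q assume "q \<in> S"
    then have "Cauchy (\<lambda>n. f n q)"
      using assms(2) convergent_Cauchy by blast
    then obtain M where "\<forall>n\<ge>M. \<forall>m\<ge>M. norm (f n q - f m q) < e"
      using CauchyD assms(3) by blast
    then show "\<forall>\<^sub>F N in sequentially. \<forall>n\<ge>N. \<forall>m\<ge>N. \<bar>f n q - f m q\<bar> < e"
      by (intro eventually_sequentiallyI[of M]) auto
  qed
  then have "\<forall>\<^sub>F N in sequentially. \<forall>q\<in>S. \<forall>n\<ge>N. \<forall>m\<ge>N. \<bar>f n q - f m q\<bar> < e"
    by (rule eventually_ball_finite[OF assms(1)])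
  then obtain N where "\<forall>q\<in>S. \<forall>n\<ge>N. \<forall>m\<ge>N. \<bar>f n q - f m q\<bar> < e"
    unfolding eventually_sequentially by auto
  then show ?thesis
    by (intro that) auto
qed

lemma rational_grid:
  fixes B e :: real
  assumes "0 < e"
  obtains R h :: real and J :: nat
  where "B \<le> R" "R \<in> \<rat>" "0 < h" "h \<le> e" "h \<in> \<rat>" "R + h \<le> - R + real J * h"
proof -
  define R where "R = real (nat \<lceil>B\<rceil>)"
  obtain M :: nat where M: "1 / e < real M"
    using reals_Archimedean2 by blast
  then have "0 < real M"
    using assms by (smt (verit) divide_pos_pos)
  define h where "h = 1 / real M"
  have "0 < h" "h \<le> e" "h \<le> 1"
    using M \<open>0 < real M\<close> assms by (simp_all add: h_def field_simps)
  have "real ((2 * nat \<lceil>B\<rceil> + 2) * M) * h = 2 * R + 2"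
    using \<open>0 < real M\<close> by (simp add: h_def R_def field_simps)
  show ?thesis
  proof (rule that[of R h "(2 * nat \<lceil>B\<rceil> + 2) * M"])
    show "B \<le> R"
      unfolding R_def by (rule real_nat_ceiling_ge)
    show "R \<in> \<rat>" "h \<in> \<rat>"
      by (simp_all add: R_def h_def)
    show "R + h \<le> - R + real ((2 * nat \<lceil>B\<rceil> + 2) * M) * h"
      using \<open>real ((2 * nat \<lceil>B\<rceil> + 2) * M) * h = 2 * R + 2\<close> \<open>h \<le> 1\<close> by simp
  qed fact+
qed

lemma levy_uniformly_cauchy_on_finite_set:
  fixes \<mu> :: "nat \<Rightarrow> 'a \<Rightarrow> real measure"
  assumes "finite A" "0 < e"
    and distr: "\<And>n t. t \<in> A \<Longrightarrow> real_distribution (\<mu> n t)"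
    and tails: "\<And>n t. t \<in> A \<Longrightarrow> cdf (\<mu> n t) (- B) \<le> e \<and> 1 - e \<le> cdf (\<mu> n t) B"
    and conv: "\<And>t y. t \<in> A \<Longrightarrow> y \<in> \<rat> \<Longrightarrow> convergent (\<lambda>n. cdf (\<mu> n t) y)"
  shows "\<exists>N. \<forall>n\<ge>N. \<forall>m\<ge>N. \<forall>t\<in>A. levy_close (cdf (\<mu> n t)) (cdf (\<mu> m t)) e"
proof -
  obtain R h J where "B \<le> R" "R \<in> \<rat>" "0 < h" "h \<le> e" "h \<in> \<rat>" and J: "R + h \<le> - R + real J * h"
    using rational_grid[OF \<open>0 < e\<close>, of B] by blast
  have "cdf (\<mu> n t) (- R) \<le> cdf (\<mu> n t) (- B)" "cdf (\<mu> n t) B \<le> cdf (\<mu> n t) R" if "t \<in> A" for n t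
    using real_distribution.mono_cdf[OF distr[OF that]] \<open>B \<le> R\<close> by (simp_all add: monoD)
  then have tails_R: "cdf (\<mu> n t) (- R) \<le> e" "1 - e \<le> cdf (\<mu> n t) R" if "t \<in> A" for n t
    using tails[OF that, of n] that by (meson order_trans)+
  define grid where "grid = A \<times> (\<lambda>j. - R + real j * h) ` {..J}"
  obtain N where N: "\<And>n m q. N \<le> n \<Longrightarrow> N \<le> m \<Longrightarrow> q \<in> grid \<Longrightarrow>
      \<bar>cdf (\<mu> n (fst q)) (snd q) - cdf (\<mu> m (fst q)) (snd q)\<bar> < e"
  proof (rule uniformly_cauchy_on_finite[of grid "\<lambda>n q. cdf (\<mu> n (fst q)) (snd q)"])
    show "convergent (\<lambda>n. cdf (\<mu> n (fst q)) (snd q))" if "q \<in> grid" for q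
      using \<open>q \<in> grid\<close> \<open>R \<in> \<rat>\<close> \<open>h \<in> \<rat>\<close> by (auto simp: grid_def intro: conv)
  qed (use \<open>finite A\<close> \<open>0 < e\<close> in \<open>auto simp: grid_def\<close>)
  have "levy_close (cdf (\<mu> n t)) (cdf (\<mu> m t)) e" if "N \<le> n" "N \<le> m" "t \<in> A" for n m t
  proof (rule levy_close_of_grid[OF _ _ _ _ tails_R tails_R \<open>0 < h\<close> \<open>h \<le> e\<close> J])
    fix j assume "j \<le> J"
    then have "(t, - R + real j * h) \<in> grid"
      using \<open>t \<in> A\<close> unfolding grid_def by blast
    then show "\<bar>cdf (\<mu> n t) (- R + real j * h) - cdf (\<mu> m t) (- R + real j * h)\<bar> \<le> e"
      using N[OF that(1,2)] by fastforce
  qed (use that real_distribution.mono_cdf real_distribution.cdf_bounds distr in auto)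
  then show ?thesis
    by blast
qed

lemma time_grid:
  fixes T \<delta> :: real
  assumes "0 < T" "0 < \<delta>"
  obtains M :: nat where "0 < M"
    and "\<And>i. i \<le> M \<Longrightarrow> real i / real M * T \<in> {0..T}"
    and "\<And>t. t \<in> {0..T} \<Longrightarrow> \<exists>i\<le>M. \<bar>t - real i / real M * T\<bar> < \<delta>"
proof -
  obtain M :: nat where M: "T / \<delta> < real M"
    using reals_Archimedean2 by blast
  then have "0 < real M"
    using assms by (smt (verit) divide_pos_pos)
  then have "T / real M < \<delta>"
    using M \<open>0 < \<delta>\<close> by (simp add: field_simps)
  show ?thesis
  proof (rule that)
    show "0 < M"
      using \<open>0 < real M\<close> by simp
    show "real i / real M * T \<in> {0..T}" if "i \<le> M" for i
      using that \<open>0 < real M\<close> \<open>0 < T\<close> mult_left_le_one_le[of T "real i / real M"] by auto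
    show "\<exists>i\<le>M. \<bar>t - real i / real M * T\<bar> < \<delta>" if t: "t \<in> {0..T}" for t
    proof -
      obtain i where i: "real i * (T / real M) \<le> t" "t < real i * (T / real M) + T / real M"
        using grid_point_below[of "T / real M" t] \<open>0 < T\<close> \<open>0 < real M\<close> t by auto
      then have "real i * (T / real M) \<le> T"
        using t by simp
      then have "i \<le> M"
        using \<open>0 < T\<close> \<open>0 < real M\<close> by (simp add: field_simps)
      then show ?thesis
        using i \<open>T / real M < \<delta>\<close> by (intro exI[of _ i]) (auto simp: field_simps)
    qed
  qed
qed

lemma levy_uniformly_cauchy_if_convergent_on_grid:
  fixes \<mu> :: "nat \<Rightarrow> real \<Rightarrow> real measure" and T e :: real
  assumes "0 < T" "0 < e"
    and distr: "\<And>n t. t \<in> {0..T} \<Longrightarrow> real_distribution (\<mu> n t)"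
    and equicont: "\<And>e. 0 < e \<Longrightarrow> \<exists>\<delta>>0. \<forall>n. \<forall>s\<in>{0..T}. \<forall>t\<in>{0..T}.
                     \<bar>s - t\<bar> < \<delta> \<longrightarrow> levy_close (cdf (\<mu> n s)) (cdf (\<mu> n t)) e"
    and tails: "\<And>e. 0 < e \<Longrightarrow> \<exists>R. \<forall>n. \<forall>t\<in>{0..T}. cdf (\<mu> n t) (- R) \<le> e \<and> 1 - e \<le> cdf (\<mu> n t) R"
    and conv: "\<And>q y. q \<in> \<rat> \<Longrightarrow> q \<in> {0..1} \<Longrightarrow> y \<in> \<rat> \<Longrightarrow> convergent (\<lambda>n. cdf (\<mu> n (q * T)) y)"
  shows "\<exists>N. \<forall>n\<ge>N. \<forall>m\<ge>N. \<forall>t\<in>{0..T}. levy_close (cdf (\<mu> n t)) (cdf (\<mu> m t)) e"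
proof -
  have "0 < e / 3"
    using \<open>0 < e\<close> by simp
  obtain \<delta> where "0 < \<delta>" and \<delta>: "\<And>n s t. s \<in> {0..T} \<Longrightarrow> t \<in> {0..T} \<Longrightarrow> \<bar>s - t\<bar> < \<delta> \<Longrightarrow>
      levy_close (cdf (\<mu> n s)) (cdf (\<mu> n t)) (e / 3)"
    using equicont[OF \<open>0 < e / 3\<close>] by blast
  obtain R where R: "\<And>n t. t \<in> {0..T} \<Longrightarrow> cdf (\<mu> n t) (- R) \<le> e / 3 \<and> 1 - e / 3 \<le> cdf (\<mu> n t) R"
    using tails[OF \<open>0 < e / 3\<close>] by blast
  obtain M :: nat where "0 < M" and times: "\<And>i. i \<le> M \<Longrightarrow> real i / real M * T \<in> {0..T}"
    and near: "\<And>t. t \<in> {0..T} \<Longrightarrow> \<exists>i\<le>M. \<bar>t - real i / real M * T\<bar> < \<delta>"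
    using time_grid[OF \<open>0 < T\<close> \<open>0 < \<delta>\<close>] by blast
  have "\<exists>N. \<forall>n\<ge>N. \<forall>m\<ge>N. \<forall>t\<in>(\<lambda>i. real i / real M * T) ` {..M}.
      levy_close (cdf (\<mu> n t)) (cdf (\<mu> m t)) (e / 3)"
  proof (rule levy_uniformly_cauchy_on_finite_set[where B = R, OF _ \<open>0 < e / 3\<close>])
    fix t y :: real assume "t \<in> (\<lambda>i. real i / real M * T) ` {..M}" "y \<in> \<rat>"
    then obtain i where "t = real i / real M * T" "i \<le> M"
      by blast
    then show "convergent (\<lambda>n. cdf (\<mu> n t) y)"
      using conv[of "real i / real M" y] \<open>y \<in> \<rat>\<close> \<open>0 < M\<close> by simp
  qed (use times distr R in auto)
  then obtain N where N: "\<And>n m i. N \<le> n \<Longrightarrow> N \<le> m \<Longrightarrow> i \<le> M \<Longrightarrow>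
      levy_close (cdf (\<mu> n (real i / real M * T))) (cdf (\<mu> m (real i / real M * T))) (e / 3)"
    by blast
  have "levy_close (cdf (\<mu> n t)) (cdf (\<mu> m t)) (e / 3 + e / 3 + e / 3)"
    if "N \<le> n" "N \<le> m" "t \<in> {0..T}" for n m t
  proof -
    obtain i where "i \<le> M" "\<bar>t - real i / real M * T\<bar> < \<delta>"
      using near[OF \<open>t \<in> {0..T}\<close>] by blast
    then show ?thesis
      using \<delta> N[OF that(1,2)] times that by (blast intro: levy_close_trans levy_close_sym)
  qed
  then show ?thesis
    by (intro exI[of _ N]) simp
qed

lemma levy_uniformly_cauchy_subsequence:
  fixes \<mu> :: "nat \<Rightarrow> real \<Rightarrow> real measure" and T :: real
  assumes "0 < T"
    and distr: "\<And>n t. t \<in> {0..T} \<Longrightarrow> real_distribution (\<mu> n t)"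
    and equicont: "\<And>e. 0 < e \<Longrightarrow> \<exists>\<delta>>0. \<forall>n. \<forall>s\<in>{0..T}. \<forall>t\<in>{0..T}.
                     \<bar>s - t\<bar> < \<delta> \<longrightarrow> levy_close (cdf (\<mu> n s)) (cdf (\<mu> n t)) e"
    and tails: "\<And>e. 0 < e \<Longrightarrow> \<exists>R. \<forall>n. \<forall>t\<in>{0..T}. cdf (\<mu> n t) (- R) \<le> e \<and> 1 - e \<le> cdf (\<mu> n t) R"
  obtains r :: "nat \<Rightarrow> nat" where "strict_mono r"
    and "\<And>e. 0 < e \<Longrightarrow> \<exists>N. \<forall>n\<ge>N. \<forall>m\<ge>N. \<forall>t\<in>{0..T}.
                 levy_close (cdf (\<mu> (r n) t)) (cdf (\<mu> (r m) t)) e"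
proof -
  define S where "S = (\<lambda>(q, y). (q * T, y)) ` ((\<rat> \<inter> {0..1}) \<times> (\<rat> :: real set))"
  have "countable S"
    unfolding S_def by (intro countable_image countable_SIGMA countable_Int1 countable_rat)
  moreover have "norm (cdf (\<mu> n (fst p)) (snd p)) \<le> 1" if "p \<in> S" for n and p :: "real \<times> real"
  proof -
    have "fst p \<in> {0..T}"
      using that \<open>0 < T\<close> by (auto simp: S_def mult_le_cancel_right1)
    then interpret real_distribution "\<mu> n (fst p)"
      by (rule distr)
    show ?thesis
      by (simp add: cdf_nonneg cdf_bounded_prob)
  qed
  ultimately obtain r :: "nat \<Rightarrow> nat" where r: "strict_mono r"
    and lim: "\<And>p. p \<in> S \<Longrightarrow> \<exists>l. (\<lambda>n. cdf (\<mu> (r n) (fst p)) (snd p)) \<longlonglongrightarrow> l"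
    using function_convergent_subsequence[of S "\<lambda>n p. cdf (\<mu> n (fst p)) (snd p)" 1] by blast
  have equicont_r: "\<exists>\<delta>>0. \<forall>n. \<forall>s\<in>{0..T}. \<forall>t\<in>{0..T}.
      \<bar>s - t\<bar> < \<delta> \<longrightarrow> levy_close (cdf (\<mu> (r n) s)) (cdf (\<mu> (r n) t)) e" if "0 < e" for e
    using equicont[OF that] by blast
  have tails_r: "\<exists>R. \<forall>n. \<forall>t\<in>{0..T}. cdf (\<mu> (r n) t) (- R) \<le> e \<and> 1 - e \<le> cdf (\<mu> (r n) t) R"
    if "0 < e" for e
    using tails[OF that] by blast
  show ?thesis
  proof (rule that[OF r])
    fix e :: real assume "0 < e"
    have conv: "convergent (\<lambda>n. cdf (\<mu> (r n) (q * T)) y)" if "q \<in> \<rat>" "q \<in> {0..1}" "y \<in> \<rat>" for q y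
    proof -
      have "(q * T, y) \<in> S"
        unfolding S_def using that by (intro image_eqI[of _ _ "(q, y)"]) auto
      then show ?thesis
        using lim[of "(q * T, y)"] by (simp add: convergent_def)
    qed
    show "\<exists>N. \<forall>n\<ge>N. \<forall>m\<ge>N. \<forall>t\<in>{0..T}. levy_close (cdf (\<mu> (r n) t)) (cdf (\<mu> (r m) t)) e"
      by (rule levy_uniformly_cauchy_if_convergent_on_grid[of T e "\<lambda>n. \<mu> (r n)",
            OF \<open>0 < T\<close> \<open>0 < e\<close> distr equicont_r tails_r conv])
  qed
qed

context
  fixes F :: "nat \<Rightarrow> real \<Rightarrow> real" and N :: "real \<Rightarrow> nat"
  assumes mono_F: "\<And>n. mono (F n)" and nonneg_F: "\<And>n y. 0 \<le> F n y"
    and cauchy_F: "\<And>e n m. 0 < e \<Longrightarrow> N e \<le> n \<Longrightarrow> N e \<le> m \<Longrightarrow> levy_close (F n) (F m) e"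
begin

definition levy_limit :: "real \<Rightarrow> real" where
  "levy_limit y = Inf {F n (y + e) + e | e n. 0 < e \<and> N e \<le> n}"

lemma levy_limit_candidates_nonempty: "{F n (y + e) + e | e n. 0 < e \<and> N e \<le> n} \<noteq> {}"
  by (intro ex_in_conv[THEN iffD1] exI[of _ "F (N 1) (y + 1) + 1"] CollectI exI[of _ 1] exI[of _ "N 1"]) simp

lemma bdd_below_levy_limit_candidates: "bdd_below {F n (y + e) + e | e n. 0 < e \<and> N e \<le> n}"
  by (rule bdd_belowI[of _ 0]) (auto intro: add_nonneg_nonneg nonneg_F)

lemma levy_limit_le: "0 < e \<Longrightarrow> N e \<le> n \<Longrightarrow> levy_limit y \<le> F n (y + e) + e"
  unfolding levy_limit_def by (rule cInf_lower[OF _ bdd_below_levy_limit_candidates]) blast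

lemma levy_limit_ge:
  assumes "0 < e" "N e \<le> n"
  shows "F n (y - e) - e \<le> levy_limit y"
  unfolding levy_limit_def
proof (rule cInf_greatest[OF levy_limit_candidates_nonempty])
  fix z assume "z \<in> {F n (y + e) + e | e n. 0 < e \<and> N e \<le> n}"
  then obtain e' m where z: "z = F m (y + e') + e'" and "0 < e'" "N e' \<le> m"
    by blast
  define k where "k = max (N e) (N e')"
  have "F n (y - e) - e \<le> F k y"
    using cauchy_F[OF assms, of k] by (simp add: k_def levy_close_def)
  moreover have "levy_close (F k) (F m) e'"
    using cauchy_F[OF \<open>0 < e'\<close> _ \<open>N e' \<le> m\<close>, of k] by (simp add: k_def)
  then have "F k (y + e' - e') - e' \<le> F m (y + e')"
    unfolding levy_close_def by blast
  ultimately show "F n (y - e) - e \<le> z"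
    using z by simp
qed

lemma levy_close_levy_limit: "0 < e \<Longrightarrow> N e \<le> n \<Longrightarrow> levy_close (F n) levy_limit e"
  unfolding levy_close_def using levy_limit_le levy_limit_ge by blast

lemma mono_levy_limit: "mono levy_limit"
proof (rule monoI)
  fix a b :: real assume "a \<le> b"
  show "levy_limit a \<le> levy_limit b"
    unfolding levy_limit_def[of b]
  proof (rule cInf_greatest[OF levy_limit_candidates_nonempty])
    fix z assume "z \<in> {F n (b + e) + e | e n. 0 < e \<and> N e \<le> n}"
    then obtain e m where z: "z = F m (b + e) + e" and "0 < e" "N e \<le> m"
      by blast
    then have "levy_limit a \<le> F m (a + e) + e"
      by (intro levy_limit_le)
    also have "\<dots> \<le> z"
      using z monoD[OF mono_F, of "a + e" "b + e" m] \<open>a \<le> b\<close> by simp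
    finally show "levy_limit a \<le> z" .
  qed
qed

lemma levy_limit_right_continuous:
  assumes right_cont: "\<And>n y. continuous (at_right y) (F n)"
  shows "continuous (at_right y) levy_limit"
proof -
  have "\<exists>\<delta>>0. levy_limit (y + \<delta>) - levy_limit y < \<epsilon>" if "0 < \<epsilon>" for \<epsilon>
  proof -
    have "Inf {F n (y + e) + e | e n. 0 < e \<and> N e \<le> n} < levy_limit y + \<epsilon> / 2"
      using \<open>0 < \<epsilon>\<close> by (simp add: levy_limit_def)
    then obtain e m where z: "F m (y + e) + e < levy_limit y + \<epsilon> / 2" and "0 < e" "N e \<le> m"
      unfolding cInf_less_iff[OF levy_limit_candidates_nonempty bdd_below_levy_limit_candidates] by blast
    have "continuous (at_right (y + e)) (F m)"
      by (rule right_cont)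
    then obtain \<delta> where "0 < \<delta>" and \<delta>: "F m (y + e + \<delta>) - F m (y + e) < \<epsilon> / 2"
      using \<open>0 < \<epsilon>\<close> continuous_at_right_real_increasing[of "F m", OF monoD[OF mono_F]]
      by (meson half_gt_zero)
    have "levy_limit (y + \<delta>) \<le> F m (y + \<delta> + e) + e"
      using \<open>0 < e\<close> \<open>N e \<le> m\<close> by (rule levy_limit_le)
    then show ?thesis
      using \<open>0 < \<delta>\<close> \<delta> z by (intro exI[of _ \<delta>]) (simp add: algebra_simps)
  qed
  then show ?thesis
    using continuous_at_right_real_increasing[of levy_limit y] monoD[OF mono_levy_limit] by blast
qed

end

lemma tendsto_if_levy_close_to_tight:
  fixes G :: "real \<Rightarrow> real"
  assumes approx: "\<And>e. 0 < e \<Longrightarrow> \<exists>F R. levy_close F G e \<and> mono F \<and> (\<forall>y. 0 \<le> F y \<and> F y \<le> 1)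
                                     \<and> F (- R) \<le> e \<and> 1 - e \<le> F R"
  shows "(G \<longlongrightarrow> 0) at_bot" and "(G \<longlongrightarrow> 1) at_top"
proof -
  have bot: "\<forall>\<^sub>F y in at_bot. dist (G y) 0 < \<epsilon>" and top: "\<forall>\<^sub>F y in at_top. dist (G y) 1 < \<epsilon>"
    if "0 < \<epsilon>" for \<epsilon>
  proof -
    obtain F R where close: "levy_close F G (\<epsilon> / 3)" and "mono F" and F_bounds: "\<forall>y. 0 \<le> F y \<and> F y \<le> 1"
      and tails: "F (- R) \<le> \<epsilon> / 3" "1 - \<epsilon> / 3 \<le> F R"
      using approx[of "\<epsilon> / 3"] \<open>0 < \<epsilon>\<close> by auto
    have G_close: "F (y - \<epsilon> / 3) - \<epsilon> / 3 \<le> G y" "G y \<le> F (y + \<epsilon> / 3) + \<epsilon> / 3" for y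
      using close unfolding levy_close_def by blast+
    have G_bounds: "- \<epsilon> / 3 \<le> G y" "G y \<le> 1 + \<epsilon> / 3" for y
    proof -
      have "0 \<le> F (y - \<epsilon> / 3)" "F (y + \<epsilon> / 3) \<le> 1"
        using F_bounds by auto
      then show "- \<epsilon> / 3 \<le> G y" "G y \<le> 1 + \<epsilon> / 3"
        using G_close[of y] by linarith+
    qed
    show "\<forall>\<^sub>F y in at_bot. dist (G y) 0 < \<epsilon>"
      unfolding eventually_at_bot_linorder
    proof (intro exI[of _ "- R - \<epsilon> / 3"] allI impI)
      fix y assume "y \<le> - R - \<epsilon> / 3"
      then have "F (y + \<epsilon> / 3) \<le> F (- R)"
        using \<open>mono F\<close> by (simp add: monoD)
      then show "dist (G y) 0 < \<epsilon>"
        using G_bounds(1)[of y] G_close(2)[of y] tails \<open>0 < \<epsilon>\<close> by (simp add: dist_real_def abs_less_iff)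
    qed
    show "\<forall>\<^sub>F y in at_top. dist (G y) 1 < \<epsilon>"
      unfolding eventually_at_top_linorder
    proof (intro exI[of _ "R + \<epsilon> / 3"] allI impI)
      fix y assume "R + \<epsilon> / 3 \<le> y"
      then have "F R \<le> F (y - \<epsilon> / 3)"
        using \<open>mono F\<close> by (simp add: monoD)
      then show "dist (G y) 1 < \<epsilon>"
        using G_bounds(2)[of y] G_close(1)[of y] tails \<open>0 < \<epsilon>\<close> by (simp add: dist_real_def abs_less_iff)
    qed
  qed
  show "(G \<longlongrightarrow> 0) at_bot" "(G \<longlongrightarrow> 1) at_top"
    using bot top by (auto intro: tendstoI)
qed

lemma levy_limit_of_cauchy_distributions:
  fixes \<mu> :: "nat \<Rightarrow> real measure" and N :: "real \<Rightarrow> nat"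
  assumes distr: "\<And>n. real_distribution (\<mu> n)"
    and cauchy: "\<And>e n m. 0 < e \<Longrightarrow> N e \<le> n \<Longrightarrow> N e \<le> m \<Longrightarrow> levy_close (cdf (\<mu> n)) (cdf (\<mu> m)) e"
    and tails: "\<And>e. 0 < e \<Longrightarrow> \<exists>R. \<forall>n. cdf (\<mu> n) (- R) \<le> e \<and> 1 - e \<le> cdf (\<mu> n) R"
  obtains \<nu> where "real_distribution \<nu>"
    and "\<And>e n. 0 < e \<Longrightarrow> N e \<le> n \<Longrightarrow> levy_close (cdf (\<mu> n)) (cdf \<nu>) e"
proof -
  let ?G = "levy_limit (\<lambda>n. cdf (\<mu> n)) N"
  note mono = real_distribution.mono_cdf[OF distr] and bounds = real_distribution.cdf_bounds[OF distr]
  note limit = mono bounds[THEN conjunct1] cauchy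
  have "\<exists>F R. levy_close F ?G e \<and> mono F \<and> (\<forall>y. 0 \<le> F y \<and> F y \<le> 1) \<and> F (- R) \<le> e \<and> 1 - e \<le> F R"
    if "0 < e" for e
    using levy_close_levy_limit[where F = "\<lambda>n. cdf (\<mu> n)" and N = N, OF limit that order_refl] mono bounds tails[OF that] by blast
  note limits = tendsto_if_levy_close_to_tight[OF this]
  have "real_distribution (interval_measure ?G)" "cdf (interval_measure ?G) = ?G"
    using limits mono_levy_limit[where F = "\<lambda>n. cdf (\<mu> n)" and N = N, OF limit]
      levy_limit_right_continuous[where F = "\<lambda>n. cdf (\<mu> n)" and N = N, OF limit finite_borel_measure.cdf_is_right_cont[OF
        real_distribution.finite_borel_measure_M[OF distr]]]
    by (simp_all add: monoD real_distribution_interval_measure cdf_interval_measure)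
  then show ?thesis
    using that levy_close_levy_limit[where F = "\<lambda>n. cdf (\<mu> n)" and N = N, OF limit] by metis
qed

lemma levy_limit_of_uniformly_cauchy:
  fixes \<mu> :: "nat \<Rightarrow> 'a \<Rightarrow> real measure"
  assumes distr: "\<And>n t. t \<in> A \<Longrightarrow> real_distribution (\<mu> n t)"
    and cauchy: "\<And>e. 0 < e \<Longrightarrow> \<exists>N. \<forall>n\<ge>N. \<forall>m\<ge>N. \<forall>t\<in>A. levy_close (cdf (\<mu> n t)) (cdf (\<mu> m t)) e"
    and tails: "\<And>e. 0 < e \<Longrightarrow> \<exists>R. \<forall>n. \<forall>t\<in>A. cdf (\<mu> n t) (- R) \<le> e \<and> 1 - e \<le> cdf (\<mu> n t) R"
  obtains \<nu> where "\<And>t. t \<in> A \<Longrightarrow> real_distribution (\<nu> t)"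
    and "\<And>e. 0 < e \<Longrightarrow> \<exists>N. \<forall>n\<ge>N. \<forall>t\<in>A. levy_close (cdf (\<mu> n t)) (cdf (\<nu> t)) e"
proof -
  obtain N where N: "\<And>e n m t. 0 < e \<Longrightarrow> N e \<le> n \<Longrightarrow> N e \<le> m \<Longrightarrow> t \<in> A \<Longrightarrow>
      levy_close (cdf (\<mu> n t)) (cdf (\<mu> m t)) e"
    using cauchy by metis
  have "\<exists>\<nu>. real_distribution \<nu> \<and> (\<forall>e n. 0 < e \<longrightarrow> N e \<le> n \<longrightarrow> levy_close (cdf (\<mu> n t)) (cdf \<nu>) e)"
    if t: "t \<in> A" for t
  proof -
    have "\<exists>R. \<forall>n. cdf (\<mu> n t) (- R) \<le> e \<and> 1 - e \<le> cdf (\<mu> n t) R" if "0 < e" for e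
      using tails[OF that] t by blast
    then obtain \<nu> where "real_distribution \<nu>"
      and "\<And>e n. 0 < e \<Longrightarrow> N e \<le> n \<Longrightarrow> levy_close (cdf (\<mu> n t)) (cdf \<nu>) e"
      using levy_limit_of_cauchy_distributions[of "\<lambda>n. \<mu> n t" N] distr[OF t] N[OF _ _ _ t]
      by metis
    then show ?thesis
      by blast
  qed
  then obtain \<nu> where "\<And>t. t \<in> A \<Longrightarrow> real_distribution (\<nu> t)"
    and "\<And>t e n. t \<in> A \<Longrightarrow> 0 < e \<Longrightarrow> N e \<le> n \<Longrightarrow> levy_close (cdf (\<mu> n t)) (cdf (\<nu> t)) e"
    by metis
  then show ?thesis
    using that by blast
qed

lemma M_space_if_levy_equicontinuous:
  assumes distr: "\<And>t. t \<in> {0..T} \<Longrightarrow> real_distribution (\<alpha> t)"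
    and equicont: "\<And>e. 0 < e \<Longrightarrow> \<exists>\<delta>>0. \<forall>s\<in>{0..T}. \<forall>t\<in>{0..T}.
                     \<bar>s - t\<bar> < \<delta> \<longrightarrow> levy_close (cdf (\<alpha> s)) (cdf (\<alpha> t)) e"
  shows "\<alpha> \<in> M_space T"
  unfolding M_space_def
proof (intro CollectI conjI ballI allI impI distr)
  fix t e :: real assume "t \<in> {0..T}" "0 < e"
  then obtain \<delta> where "0 < \<delta>"
    and \<delta>: "\<forall>s\<in>{0..T}. \<bar>s - t\<bar> < \<delta> \<longrightarrow> levy_close (cdf (\<alpha> s)) (cdf (\<alpha> t)) (e / 2)"
    using equicont[of "e / 2"] by auto
  then show "\<exists>d>0. \<forall>s\<in>{0..T}. \<bar>s - t\<bar> < d \<longrightarrow> levy_dist (\<alpha> s) (\<alpha> t) < e"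
    using \<open>0 < e\<close> by (auto intro!: exI[of _ \<delta>] levy_dist_less[of _ _ "e / 2"])
qed

lemma levy_equicontinuous_uniform_limit:
  fixes \<mu> :: "nat \<Rightarrow> real \<Rightarrow> real measure" and \<nu> :: "real \<Rightarrow> real measure"
  assumes equicont: "\<And>e. 0 < e \<Longrightarrow> \<exists>\<delta>>0. \<forall>n. \<forall>s\<in>A. \<forall>t\<in>A.
                     \<bar>s - t\<bar> < \<delta> \<longrightarrow> levy_close (cdf (\<mu> n s)) (cdf (\<mu> n t)) e"
    and close: "\<And>e. 0 < e \<Longrightarrow> \<exists>N. \<forall>n\<ge>N. \<forall>t\<in>A. levy_close (cdf (\<mu> n t)) (cdf (\<nu> t)) e"
    and "0 < e"
  shows "\<exists>\<delta>>0. \<forall>s\<in>A. \<forall>t\<in>A. \<bar>s - t\<bar> < \<delta> \<longrightarrow> levy_close (cdf (\<nu> s)) (cdf (\<nu> t)) e"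
proof -
  obtain \<delta> where "0 < \<delta>" and \<delta>: "\<forall>n. \<forall>s\<in>A. \<forall>t\<in>A.
      \<bar>s - t\<bar> < \<delta> \<longrightarrow> levy_close (cdf (\<mu> n s)) (cdf (\<mu> n t)) (e / 3)"
    using equicont[of "e / 3"] \<open>0 < e\<close> by auto
  obtain N where N: "\<forall>t\<in>A. levy_close (cdf (\<mu> N t)) (cdf (\<nu> t)) (e / 3)"
    using close[of "e / 3"] \<open>0 < e\<close> by auto
  have "levy_close (cdf (\<nu> s)) (cdf (\<nu> t)) (e / 3 + e / 3 + e / 3)"
    if "s \<in> A" "t \<in> A" "\<bar>s - t\<bar> < \<delta>" for s t
    using N \<delta> that by (blast intro: levy_close_trans levy_close_sym)
  then show ?thesis
    using \<open>0 < \<delta>\<close> by auto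
qed

theorem M_tight_if_levy_equicontinuous:
  fixes \<mu> :: "nat \<Rightarrow> real \<Rightarrow> real measure" and T :: real
  assumes "0 < T"
    and distr: "\<And>n t. t \<in> {0..T} \<Longrightarrow> real_distribution (\<mu> n t)"
    and equicont: "\<And>e. 0 < e \<Longrightarrow> \<exists>\<delta>>0. \<forall>n. \<forall>s\<in>{0..T}. \<forall>t\<in>{0..T}.
                     \<bar>s - t\<bar> < \<delta> \<longrightarrow> levy_close (cdf (\<mu> n s)) (cdf (\<mu> n t)) e"
    and tails: "\<And>e. 0 < e \<Longrightarrow> \<exists>R. \<forall>n. \<forall>t\<in>{0..T}. cdf (\<mu> n t) (- R) \<le> e \<and> 1 - e \<le> cdf (\<mu> n t) R"
  shows "M_tight T \<mu>"
proof -
  obtain r :: "nat \<Rightarrow> nat" where "strict_mono r" and cauchy: "\<And>e. 0 < e \<Longrightarrow>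
      \<exists>N. \<forall>n\<ge>N. \<forall>m\<ge>N. \<forall>t\<in>{0..T}. levy_close (cdf (\<mu> (r n) t)) (cdf (\<mu> (r m) t)) e"
    using levy_uniformly_cauchy_subsequence[OF \<open>0 < T\<close> distr equicont tails] by metis
  have equicont_r: "\<exists>\<delta>>0. \<forall>n. \<forall>s\<in>{0..T}. \<forall>t\<in>{0..T}.
      \<bar>s - t\<bar> < \<delta> \<longrightarrow> levy_close (cdf (\<mu> (r n) s)) (cdf (\<mu> (r n) t)) e" if "0 < e" for e
    using equicont[OF that] by blast
  have tails_r: "\<exists>R. \<forall>n. \<forall>t\<in>{0..T}. cdf (\<mu> (r n) t) (- R) \<le> e \<and> 1 - e \<le> cdf (\<mu> (r n) t) R"
    if "0 < e" for e
    using tails[OF that] by blast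
  obtain \<nu> where \<nu>_distr: "\<And>t. t \<in> {0..T} \<Longrightarrow> real_distribution (\<nu> t)"
    and close: "\<And>e. 0 < e \<Longrightarrow> \<exists>N. \<forall>n\<ge>N. \<forall>t\<in>{0..T}. levy_close (cdf (\<mu> (r n) t)) (cdf (\<nu> t)) e"
    using levy_limit_of_uniformly_cauchy[of "{0..T}" "\<lambda>n. \<mu> (r n)", OF distr cauchy tails_r] by metis
  have "\<nu> \<in> M_space T"
    using levy_equicontinuous_uniform_limit[OF equicont_r close]
    by (intro M_space_if_levy_equicontinuous \<nu>_distr)
  moreover have "\<mu> n \<in> M_space T" for n
  proof (rule M_space_if_levy_equicontinuous[OF distr])
    fix e :: real assume "0 < e"
    then show "\<exists>\<delta>>0. \<forall>s\<in>{0..T}. \<forall>t\<in>{0..T}. \<bar>s - t\<bar> < \<delta> \<longrightarrow> levy_close (cdf (\<mu> n s)) (cdf (\<mu> n t)) e"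
      using equicont[of e] by blast
  qed
  moreover have "\<exists>n0. \<forall>n\<ge>n0. \<forall>t\<in>{0..T}. levy_dist ((\<mu> \<circ> r) n t) (\<nu> t) < e" if "0 < e" for e
    using close[of "e / 2"] that by (force intro: levy_dist_less)
  ultimately show ?thesis
    unfolding M_tight_def M_conv_def using \<open>strict_mono r\<close> by blast
qed

section \<open>The symmetric particle system\<close>

lemma nonincreasing_if_derivative_nonpos_within:
  fixes f f' :: "real \<Rightarrow> real"
  assumes der: "\<And>t. a \<le> t \<Longrightarrow> (f has_real_derivative f' t) (at t within {a..})"
    and nonpos: "\<And>t. a \<le> t \<Longrightarrow> f' t \<le> 0"
    and "a \<le> s" "s \<le> t"
  shows "f t \<le> f s"
proof (rule DERIV_nonpos_imp_decreasing_open[OF \<open>s \<le> t\<close>])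
  fix y assume "s < y" "y < t"
  then have "a < y"
    using \<open>a \<le> s\<close> by linarith
  then have "at y within {a..} = at y"
    by (intro at_within_interior) (simp add: interior_Ici[of "a - 1"])
  then show "\<exists>z. (f has_real_derivative z) (at y) \<and> z \<le> 0"
    using der[of y] nonpos[of y] \<open>a < y\<close> by auto
next
  have "continuous_on {a..} f"
    using der by (rule DERIV_continuous_on) simp
  then show "continuous_on {s..t} f"
    by (rule continuous_on_subset) (use \<open>a \<le> s\<close> in auto)
qed

lemma sum_sum_antisymmetric:
  fixes g :: "'a \<Rightarrow> 'b :: field_char_0" and a :: "'a \<Rightarrow> 'a \<Rightarrow> 'b"
  assumes "\<And>k j. a k j = - a j k"
  shows "(\<Sum>k\<in>I. \<Sum>j\<in>I. g k * a k j) = (\<Sum>k\<in>I. \<Sum>j\<in>I. (g k - g j) * a k j) / 2"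
proof -
  let ?S = "\<Sum>k\<in>I. \<Sum>j\<in>I. g k * a k j"
  have "?S = (\<Sum>j\<in>I. \<Sum>k\<in>I. g k * a k j)"
    by (rule sum.swap)
  also have "\<dots> = (\<Sum>k\<in>I. \<Sum>j\<in>I. - g j * a k j)"
  proof (intro sum.cong refl)
    fix k j
    show "g j * a j k = - g j * a k j"
      using assms[of j k] by simp
  qed
  finally have "2 * ?S = ?S + (\<Sum>k\<in>I. \<Sum>j\<in>I. - g j * a k j)"
    by simp
  also have "\<dots> = (\<Sum>k\<in>I. \<Sum>j\<in>I. (g k - g j) * a k j)"
    by (simp add: sum.distrib[symmetric] algebra_simps)
  finally show ?thesis
    by (simp add: eq_divide_eq mult.commute)
qed

locale particle_system =
  fixes K :: nat and V :: "nat \<Rightarrow> real \<Rightarrow> real" and x :: "nat \<Rightarrow> real"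
  assumes K_pos: "1 \<le> K"
    and incr: "\<And>i j. 1 \<le> i \<Longrightarrow> i < j \<Longrightarrow> j \<le> 2*K+1 \<Longrightarrow> x i < x j"
    and range: "\<And>k. 1 \<le> k \<Longrightarrow> k \<le> K \<Longrightarrow> x k \<in> {-2..-1}"
    and symm: "\<And>k. 1 \<le> k \<Longrightarrow> k \<le> K \<Longrightarrow> x (2*K+2-k) = - x k"
    and mid: "x (K+1) = 0"
    and init: "\<And>k. k \<in> {1..2*K+1} \<Longrightarrow> V k 0 = x k"
    and distinct: "\<And>k j t. k \<in> {1..2*K+1} \<Longrightarrow> j \<in> {1..2*K+1} \<Longrightarrow> j \<noteq> k
                   \<Longrightarrow> t \<ge> 0 \<Longrightarrow> V k t \<noteq> V j t"
    and ode: "\<And>k t. k \<in> {1..2*K+1} \<Longrightarrow> t \<ge> 0 \<Longrightarrow>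
       (V k has_real_derivative
          (\<Sum>j\<in>{1..2*K+1} - {k}. 2 * (lam K k + lam K j) / (V k t - V j t))) (at t within {0..})"
begin

abbreviation I :: "nat set" where
  "I \<equiv> {1..2*K+1}"

definition coupling :: "nat \<Rightarrow> nat \<Rightarrow> real" where
  "coupling k j = 2 * (lam K k + lam K j)"

text \<open>The summand \<open>j = k\<close> vanishes because division by zero yields zero.\<close>
definition drift :: "nat \<Rightarrow> real \<Rightarrow> real" where
  "drift k t = (\<Sum>j\<in>I. coupling k j / (V k t - V j t))"

lemma coupling_sym: "coupling k j = coupling j k"
  by (simp add: coupling_def)

lemma coupling_nonneg: "0 \<le> coupling k j"
  by (simp add: coupling_def lam_def)

lemma sum_sum_coupling: "(\<Sum>k\<in>I. \<Sum>j\<in>I. coupling k j) = 4 * real (2*K+1)"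
proof -
  have inner: "(\<Sum>j\<in>I. coupling k j) = 2 * real (2*K+1) * lam K k + 2" for k
  proof -
    have "(\<Sum>j\<in>I. coupling k j) = (\<Sum>j\<in>I. 2 * lam K k) + 2 * (\<Sum>j\<in>I. lam K j)"
      unfolding coupling_def by (simp add: sum.distrib sum_distrib_left)
    also have "(\<Sum>j\<in>I. lam K j) = 1"
      by (rule sum_lam[OF K_pos])
    also have "(\<Sum>j\<in>I. 2 * lam K k) = real (2*K+1) * (2 * lam K k)"
      by simp
    finally show ?thesis
      by simp
  qed
  have "(\<Sum>k\<in>I. \<Sum>j\<in>I. coupling k j) = 2 * real (2*K+1) * (\<Sum>k\<in>I. lam K k) + (\<Sum>k\<in>I. 2)"
    by (simp only: inner sum.distrib sum_distrib_left)
  also have "(\<Sum>k\<in>I. lam K k) = 1"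
    by (rule sum_lam[OF K_pos])
  finally show ?thesis
    by simp
qed

lemma V_has_derivative:
  assumes "k \<in> I" "0 \<le> t"
  shows "(V k has_real_derivative drift k t) (at t within {0..})"
proof -
  have "drift k t = coupling k k / (V k t - V k t) + (\<Sum>j\<in>I - {k}. coupling k j / (V k t - V j t))"
    unfolding drift_def by (rule sum.remove[OF finite_atLeastAtMost assms(1)])
  then have "drift k t = (\<Sum>j\<in>I - {k}. 2 * (lam K k + lam K j) / (V k t - V j t))"
    by (simp only: coupling_def diff_self div_by_0 add_0)
  then show ?thesis
    using ode[OF assms] by simp
qed

lemma V_continuous_on: "k \<in> I \<Longrightarrow> continuous_on {0..} (V k)"
  by (rule DERIV_continuous_on[OF V_has_derivative]) auto

lemma V_less:
  assumes "i \<in> I" "j \<in> I" "i < j" "0 \<le> t"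
  shows "V i t < V j t"
proof (rule ccontr)
  assume "\<not> V i t < V j t"
  moreover have "V i 0 - V j 0 \<le> 0"
    using init assms incr[of i j] by force
  moreover have "{0..t} \<subseteq> {0..}"
    by auto
  then have "continuous_on {0..t} (\<lambda>s. V i s - V j s)"
    using V_continuous_on[OF assms(1)] V_continuous_on[OF assms(2)]
    by (intro continuous_on_diff) (auto intro: continuous_on_subset)
  ultimately obtain s where "0 \<le> s" "s \<le> t" "V i s - V j s = 0"
    using IVT'[of "\<lambda>s. V i s - V j s" 0 0 t] assms(4) by auto
  then show False
    using distinct[of i j s] assms by auto
qed

end

context particle_system
begin

definition mirror :: "nat \<Rightarrow> nat" where
  "mirror k = 2*K+2 - k"

lemma mirror_in_I: "k \<in> I \<Longrightarrow> mirror k \<in> I"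
  by (auto simp: mirror_def)

lemma mirror_mirror: "k \<in> I \<Longrightarrow> mirror (mirror k) = k"
  by (auto simp: mirror_def)

lemma lam_mirror: "k \<in> I \<Longrightarrow> lam K (mirror k) = lam K k"
  by (auto simp: mirror_def lam_def)

lemma mirror_less: "k \<in> I \<Longrightarrow> j \<in> I \<Longrightarrow> k < j \<Longrightarrow> mirror j < mirror k"
  by (auto simp: mirror_def)

lemma x_mirror:
  assumes "k \<in> I"
  shows "x (mirror k) = - x k"
proof -
  consider "k \<le> K" | "k = K + 1" | "K + 2 \<le> k"
    by linarith
  then show ?thesis
  proof cases
    case 1
    then show ?thesis
      using symm[of k] assms by (simp add: mirror_def)
  next
    case 2
    then show ?thesis
      using mid by (simp add: mirror_def)
  next
    case 3
    then have "x (2*K+2 - mirror k) = - x (mirror k)"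
      using symm[of "mirror k"] assms by (auto simp: mirror_def)
    then show ?thesis
      using mirror_mirror[OF assms] by (simp add: mirror_def)
  qed
qed

lemma x_bounds:
  assumes "k \<in> I"
  shows "\<bar>x k\<bar> \<le> 2"
proof -
  consider "k \<le> K" | "k = K + 1" | "K + 2 \<le> k"
    by linarith
  then show ?thesis
  proof cases
    case 1
    then show ?thesis
      using range[of k] assms by auto
  next
    case 2
    then show ?thesis
      using mid by simp
  next
    case 3
    then have "1 \<le> mirror k" "mirror k \<le> K"
      using assms by (auto simp: mirror_def)
    then show ?thesis
      using range[of "mirror k"] x_mirror[OF assms] by auto
  qed
qed

lemma sum_mirror: "(\<Sum>j\<in>I. h (mirror j)) = (\<Sum>j\<in>I. h j)"
  by (rule sum.reindex_bij_witness[of _ mirror mirror]) (auto simp: mirror_def)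

definition mirror_weight :: "nat \<Rightarrow> nat \<Rightarrow> real \<Rightarrow> real" where
  "mirror_weight k j t = coupling k j / ((V k t - V j t) * (V (mirror k) t - V (mirror j) t))"

lemma mirror_weight_sym: "mirror_weight k j t = mirror_weight j k t"
  unfolding mirror_weight_def coupling_def by (simp add: algebra_simps)

lemma mirror_weight_nonpos:
  assumes "k \<in> I" "j \<in> I" "0 \<le> t"
  shows "mirror_weight k j t \<le> 0"
proof -
  have "(V k t - V j t) * (V (mirror k) t - V (mirror j) t) \<le> 0"
  proof (cases k j rule: linorder_cases)
    case less
    then show ?thesis
      using V_less[of k j t] V_less[of "mirror j" "mirror k" t] mirror_less mirror_in_I assms
      by (intro mult_nonpos_nonneg) auto
  next
    case greater
    then show ?thesis
      using V_less[of j k t] V_less[of "mirror k" "mirror j" t] mirror_less mirror_in_I assms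
      by (intro mult_nonneg_nonpos) auto
  qed simp
  then show ?thesis
    unfolding mirror_weight_def using coupling_nonneg by (simp add: divide_nonneg_nonpos)
qed

lemma drift_add_mirror:
  assumes "k \<in> I" "0 \<le> t"
  shows "drift k t + drift (mirror k) t
    = (\<Sum>j\<in>I. mirror_weight k j t * ((V k t + V (mirror k) t) - (V j t + V (mirror j) t)))"
proof -
  have "drift (mirror k) t = (\<Sum>j\<in>I. coupling (mirror k) (mirror j) / (V (mirror k) t - V (mirror j) t))"
    unfolding drift_def by (rule sum_mirror[symmetric])
  also have "\<dots> = (\<Sum>j\<in>I. coupling k j / (V (mirror k) t - V (mirror j) t))"
    using assms(1) by (intro sum.cong refl) (simp add: coupling_def lam_mirror)
  finally have "drift k t + drift (mirror k) t
      = (\<Sum>j\<in>I. coupling k j / (V k t - V j t) + coupling k j / (V (mirror k) t - V (mirror j) t))"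
    unfolding drift_def by (simp add: sum.distrib)
  also have "\<dots> = (\<Sum>j\<in>I. mirror_weight k j t * ((V k t + V (mirror k) t) - (V j t + V (mirror j) t)))"
  proof (rule sum.cong[OF refl])
    fix j assume "j \<in> I"
    show "coupling k j / (V k t - V j t) + coupling k j / (V (mirror k) t - V (mirror j) t)
        = mirror_weight k j t * ((V k t + V (mirror k) t) - (V j t + V (mirror j) t))"
    proof (cases "j = k")
      case False
      then have "mirror j \<noteq> mirror k"
        using mirror_mirror \<open>j \<in> I\<close> assms(1) by metis
      then have "V k t - V j t \<noteq> 0" "V (mirror k) t - V (mirror j) t \<noteq> 0"
        using distinct[of k j t] distinct[of "mirror k" "mirror j" t] False \<open>j \<in> I\<close> assms mirror_in_I
        by auto
      then show ?thesis
        unfolding mirror_weight_def by (simp add: field_simps)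
    qed (simp add: mirror_weight_def)
  qed
  finally show ?thesis .
qed

definition asymmetry :: "real \<Rightarrow> real" where
  "asymmetry t = (\<Sum>k\<in>I. (V k t + V (mirror k) t)^2)"

lemma asymmetry_has_derivative:
  assumes "0 \<le> t"
  shows "(asymmetry has_real_derivative
      (\<Sum>k\<in>I. 2 * (V k t + V (mirror k) t) * (drift k t + drift (mirror k) t))) (at t within {0..})"
  unfolding asymmetry_def
proof (rule DERIV_sum)
  fix k assume "k \<in> I"
  then have "((\<lambda>t. V k t + V (mirror k) t) has_real_derivative drift k t + drift (mirror k) t)
      (at t within {0..})"
    using assms by (intro DERIV_add V_has_derivative mirror_in_I)
  from DERIV_power[OF this, of 2]
  show "((\<lambda>t. (V k t + V (mirror k) t)^2) has_real_derivative
      2 * (V k t + V (mirror k) t) * (drift k t + drift (mirror k) t)) (at t within {0..})"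
    by (simp add: algebra_simps)
qed

lemma asymmetry_derivative_nonpos:
  assumes "0 \<le> t"
  shows "(\<Sum>k\<in>I. 2 * (V k t + V (mirror k) t) * (drift k t + drift (mirror k) t)) \<le> 0"
proof -
  define u where "u k = V k t + V (mirror k) t" for k
  define w where "w k j = mirror_weight k j t" for k j
  have anti: "w k j * (u k - u j) = - (w j k * (u j - u k))" for k j
    by (simp add: w_def mirror_weight_sym[of k j] algebra_simps)
  have "(\<Sum>k\<in>I. 2 * u k * (drift k t + drift (mirror k) t))
      = (\<Sum>k\<in>I. 2 * (\<Sum>j\<in>I. u k * (w k j * (u k - u j))))"
  proof (rule sum.cong[OF refl])
    fix k assume "k \<in> I"
    then show "2 * u k * (drift k t + drift (mirror k) t) = 2 * (\<Sum>j\<in>I. u k * (w k j * (u k - u j)))"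
      unfolding drift_add_mirror[OF \<open>k \<in> I\<close> assms] u_def w_def by (simp only: sum_distrib_left mult.assoc)
  qed
  also have "\<dots> = 2 * (\<Sum>k\<in>I. \<Sum>j\<in>I. u k * (w k j * (u k - u j)))"
    by (rule sum_distrib_left[symmetric])
  also have "\<dots> = (\<Sum>k\<in>I. \<Sum>j\<in>I. (u k - u j) * (w k j * (u k - u j)))"
    by (simp only: sum_sum_antisymmetric[of "\<lambda>k j. w k j * (u k - u j)", OF anti])
  also have "\<dots> = (\<Sum>k\<in>I. \<Sum>j\<in>I. w k j * (u k - u j)^2)"
    by (intro sum.cong refl) (simp add: power2_eq_square)
  also have "\<dots> \<le> 0"
    using mirror_weight_nonpos assms by (intro sum_nonpos mult_nonpos_nonneg) (auto simp: w_def)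
  finally show ?thesis
    by (simp add: u_def)
qed

lemma V_mirror:
  assumes "k \<in> I" "0 \<le> t"
  shows "V (mirror k) t = - V k t"
proof -
  have "asymmetry 0 = 0"
    unfolding asymmetry_def using init x_mirror mirror_in_I by (intro sum.neutral) auto
  moreover have "asymmetry t \<le> asymmetry 0"
    by (rule nonincreasing_if_derivative_nonpos_within[OF asymmetry_has_derivative
          asymmetry_derivative_nonpos order_refl assms(2)])
  moreover have "(V k t + V (mirror k) t)^2 \<le> asymmetry t"
    unfolding asymmetry_def using assms(1) by (intro member_le_sum) auto
  ultimately have "(V k t + V (mirror k) t)^2 \<le> 0"
    by linarith
  then show ?thesis
    by simp
qed

lemma middle_particle_zero: "0 \<le> t \<Longrightarrow> V (K + 1) t = 0"
  using V_mirror[of "K + 1" t] by (simp add: mirror_def)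

lemma drift_moment_bound:
  fixes g :: "real \<Rightarrow> real"
  assumes lip: "\<And>a b. \<bar>g a - g b\<bar> \<le> L * \<bar>a - b\<bar>"
  shows "\<bar>\<Sum>k\<in>I. g (V k t) * drift k t\<bar> \<le> 2 * L * real (2*K+1)"
proof -
  have "0 \<le> L"
    using lip[of 1 0] abs_ge_zero[of "g 1 - g 0"] by simp
  define a where "a k j = coupling k j / (V k t - V j t)" for k j
  have anti: "a k j = - a j k" for k j
    unfolding a_def coupling_sym[of j k] by (metis divide_minus_right minus_diff_eq)
  have "(\<Sum>k\<in>I. g (V k t) * drift k t) = (\<Sum>k\<in>I. \<Sum>j\<in>I. g (V k t) * a k j)"
    unfolding drift_def a_def by (simp only: sum_distrib_left)
  also have "\<dots> = (\<Sum>k\<in>I. \<Sum>j\<in>I. (g (V k t) - g (V j t)) * a k j) / 2"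
    by (rule sum_sum_antisymmetric[OF anti])
  finally have sum_eq: "(\<Sum>k\<in>I. g (V k t) * drift k t) = (\<Sum>k\<in>I. \<Sum>j\<in>I. (g (V k t) - g (V j t)) * a k j) / 2" .
  have term_bound: "\<bar>(g (V k t) - g (V j t)) * a k j\<bar> \<le> L * coupling k j" for k j
  proof (cases "V k t = V j t")
    case True
    then show ?thesis
      using coupling_nonneg \<open>0 \<le> L\<close> by (simp add: a_def)
  next
    case False
    have "\<bar>(g (V k t) - g (V j t)) * a k j\<bar> = \<bar>g (V k t) - g (V j t)\<bar> / \<bar>V k t - V j t\<bar> * coupling k j"
      using coupling_nonneg by (simp add: a_def abs_mult abs_divide)
    also have "\<bar>g (V k t) - g (V j t)\<bar> / \<bar>V k t - V j t\<bar> \<le> L"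
      using lip[of "V k t" "V j t"] False by (simp add: divide_le_eq)
    then have "\<bar>g (V k t) - g (V j t)\<bar> / \<bar>V k t - V j t\<bar> * coupling k j \<le> L * coupling k j"
      using coupling_nonneg by (rule mult_right_mono)
    finally show ?thesis .
  qed
  have "\<bar>\<Sum>k\<in>I. \<Sum>j\<in>I. (g (V k t) - g (V j t)) * a k j\<bar> \<le> (\<Sum>k\<in>I. \<Sum>j\<in>I. L * coupling k j)"
    by (rule order_trans[OF sum_abs sum_mono], rule order_trans[OF sum_abs sum_mono], rule term_bound)
  also have "\<dots> = 4 * L * real (2*K+1)"
    by (simp only: sum_distrib_left[symmetric] sum_sum_coupling mult.assoc mult.left_commute)
  finally show ?thesis
    unfolding sum_eq by simp
qed

lemma weighted_sum_split:
  assumes "0 \<le> t"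
  shows "(\<Sum>k\<in>I. lam K k * f (V k t)) = (\<Sum>k\<in>I. f (V k t)) / (4 * real K) + (1/2 - 1 / (4 * real K)) * f 0"
proof -
  let ?c = "1 / (4 * real K)"
  have "(\<Sum>k\<in>I. lam K k * f (V k t))
      = (\<Sum>k\<in>I. ?c * f (V k t) + (if k = K + 1 then (1/2 - ?c) * f (V k t) else 0))"
    by (intro sum.cong refl) (simp add: lam_def algebra_simps)
  also have "\<dots> = ?c * (\<Sum>k\<in>I. f (V k t)) + (\<Sum>k\<in>I. if k = K + 1 then (1/2 - ?c) * f (V k t) else 0)"
    by (simp only: sum.distrib sum_distrib_left)
  also have "(\<Sum>k\<in>I. if k = K + 1 then (1/2 - ?c) * f (V k t) else 0) = (1/2 - ?c) * f (V (K + 1) t)"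
    by (simp only: sum.delta[OF finite_atLeastAtMost]) simp
  finally show ?thesis
    using middle_particle_zero[OF assms] by simp
qed

lemma weighted_sum_lipschitz:
  fixes f f' :: "real \<Rightarrow> real"
  assumes der: "\<And>y. (f has_real_derivative f' y) (at y)"
    and lip: "\<And>a b. \<bar>f' a - f' b\<bar> \<le> L * \<bar>a - b\<bar>"
    and "0 \<le> s" "0 \<le> t"
  shows "\<bar>(\<Sum>k\<in>I. lam K k * f (V k t)) - (\<Sum>k\<in>I. lam K k * f (V k s))\<bar> \<le> 3/2 * L * \<bar>t - s\<bar>"
proof -
  have "0 \<le> L"
    using lip[of 1 0] abs_ge_zero[of "f' 1 - f' 0"] by simp
  define H where "H t = (\<Sum>k\<in>I. f (V k t)) / (4 * real K)" for t
  have "(H has_real_derivative (\<Sum>k\<in>I. f' (V k t) * drift k t) / (4 * real K)) (at t within {0..})"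
    if "0 \<le> t" for t
    unfolding H_def by (intro DERIV_cdivide DERIV_sum DERIV_chain2[OF der] V_has_derivative that)
  moreover have "\<bar>(\<Sum>k\<in>I. f' (V k t) * drift k t) / (4 * real K)\<bar> \<le> 3/2 * L" for t
  proof -
    have "\<bar>(\<Sum>k\<in>I. f' (V k t) * drift k t) / (4 * real K)\<bar> = \<bar>\<Sum>k\<in>I. f' (V k t) * drift k t\<bar> / (4 * real K)"
      by (simp add: abs_divide)
    also have "\<dots> \<le> 2 * L * real (2*K+1) / (4 * real K)"
      by (rule divide_right_mono[OF drift_moment_bound[OF lip]]) simp
    also have "\<dots> = L * (1 + 1 / (2 * real K))"
      using K_pos by (simp add: field_simps)
    also have "\<dots> \<le> L * (3/2)"
      using K_pos \<open>0 \<le> L\<close> by (intro mult_left_mono) (auto simp: field_simps)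
    finally show ?thesis
      by simp
  qed
  ultimately have "norm (H t - H s) \<le> 3/2 * L * norm (t - s)"
    using assms(3,4) by (intro field_differentiable_bound[of "{0..}"]) auto
  then show ?thesis
    using weighted_sum_split[OF assms(3)] weighted_sum_split[OF assms(4)] by (simp add: H_def)
qed

abbreviation empirical :: "real \<Rightarrow> real measure" where
  "empirical t \<equiv> emp_measure K (\<lambda>k. V k t)"

lemma cdf_empirical_le_shifted:
  assumes "0 \<le> s" "0 \<le> t" "0 < \<epsilon>"
  shows "cdf (empirical t) a \<le> cdf (empirical s) (a + \<epsilon>) + 24 * \<bar>t - s\<bar> / \<epsilon>^2"
proof -
  obtain f f' :: "real \<Rightarrow> real" where der: "\<And>y. (f has_real_derivative f' y) (at y)"
    and lip: "\<And>p q. \<bar>f' p - f' q\<bar> \<le> 16 / \<epsilon>^2 * \<bar>p - q\<bar>"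
    and below: "\<And>y. indicator {..a} y \<le> f y" and above: "\<And>y. f y \<le> indicator {..a + \<epsilon>} y"
    using smooth_step_between_indicators[OF \<open>0 < \<epsilon>\<close>] by blast
  have "cdf (empirical t) a \<le> (\<Sum>k\<in>I. lam K k * f (V k t))"
    unfolding cdf_emp_measure by (intro sum_mono mult_left_mono below lam_nonneg)
  moreover have "(\<Sum>k\<in>I. lam K k * f (V k s)) \<le> cdf (empirical s) (a + \<epsilon>)"
    unfolding cdf_emp_measure by (intro sum_mono mult_left_mono above lam_nonneg)
  moreover have "\<bar>(\<Sum>k\<in>I. lam K k * f (V k t)) - (\<Sum>k\<in>I. lam K k * f (V k s))\<bar> \<le> 3/2 * (16 / \<epsilon>^2) * \<bar>t - s\<bar>"
    by (rule weighted_sum_lipschitz[OF der lip assms(1,2)])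
  ultimately show ?thesis
    by (simp add: abs_le_iff)
qed

lemma levy_close_empirical:
  assumes "0 \<le> s" "0 \<le> t" "0 < e" "\<bar>s - t\<bar> < e^3 / 24"
  shows "levy_close (cdf (empirical s)) (cdf (empirical t)) e"
proof -
  have "24 * \<bar>t - s\<bar> / e^2 \<le> e"
    using assms(3,4) by (simp add: abs_minus_commute divide_le_eq power2_eq_square power3_eq_cube)
  then show ?thesis
    unfolding levy_close_def
    using cdf_empirical_le_shifted[OF assms(2,1,3)] cdf_empirical_le_shifted[OF assms(1,2,3)]
    by (smt (verit) abs_minus_commute)
qed

lemma empirical_tails:
  assumes "0 < e" "0 < T" "t \<in> {0..T}"
  shows "cdf (empirical t) (- (3 + sqrt (24 * T / e))) \<le> e"
    and "1 - e \<le> cdf (empirical t) (3 + sqrt (24 * T / e))"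
proof -
  define \<epsilon> where "\<epsilon> = sqrt (24 * T / e)"
  have "0 < \<epsilon>" "\<epsilon>^2 = 24 * T / e"
    using assms by (simp_all add: \<epsilon>_def)
  then have shift_error: "24 * \<bar>t - 0\<bar> / \<epsilon>^2 \<le> e"
    using assms by (simp add: field_simps)
  have initial: "\<bar>V k 0\<bar> \<le> 2" if "k \<in> I" for k
    using init[OF that] x_bounds[OF that] by simp
  have "cdf (empirical 0) (- 3) = 0"
    unfolding cdf_emp_measure using initial by (intro sum.neutral) (force simp: abs_le_iff)
  then show "cdf (empirical t) (- (3 + sqrt (24 * T / e))) \<le> e"
    using cdf_empirical_le_shifted[of 0 t \<epsilon> "- 3 - \<epsilon>"] assms(3) \<open>0 < \<epsilon>\<close> shift_error
    by (simp add: \<epsilon>_def)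
  have "cdf (empirical 0) 3 = (\<Sum>k\<in>I. lam K k)"
    unfolding cdf_emp_measure using initial by (intro sum.cong refl) (force simp: abs_le_iff)
  then have "cdf (empirical 0) 3 = 1"
    using sum_lam[OF K_pos] by simp
  then show "1 - e \<le> cdf (empirical t) (3 + sqrt (24 * T / e))"
    using cdf_empirical_le_shifted[of t 0 \<epsilon> 3] assms(3) \<open>0 < \<epsilon>\<close> shift_error
    by (simp add: \<epsilon>_def abs_minus_commute)
qed

end

theorem mainTheorem5:
  fixes x :: "nat \<Rightarrow> nat \<Rightarrow> real" and V :: "nat \<Rightarrow> nat \<Rightarrow> real \<Rightarrow> real"
  assumes incr: "\<And>K i j. K \<ge> 1 \<Longrightarrow> 1 \<le> i \<Longrightarrow> i < j \<Longrightarrow> j \<le> 2*K+1 \<Longrightarrow> x K i < x K j"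
    and range: "\<And>K k. K \<ge> 1 \<Longrightarrow> 1 \<le> k \<Longrightarrow> k \<le> K \<Longrightarrow> x K k \<in> {-2..-1}"
    and symm: "\<And>K k. K \<ge> 1 \<Longrightarrow> 1 \<le> k \<Longrightarrow> k \<le> K \<Longrightarrow> x K (2*K+2-k) = - x K k"
    and mid: "\<And>K. K \<ge> 1 \<Longrightarrow> x K (K+1) = 0"
    and init: "\<And>K k. K \<ge> 1 \<Longrightarrow> k \<in> {1..2*K+1} \<Longrightarrow> V K k 0 = x K k"
    and distinct: "\<And>K k j t. K \<ge> 1 \<Longrightarrow> k \<in> {1..2*K+1} \<Longrightarrow> j \<in> {1..2*K+1} \<Longrightarrow> j \<noteq> k
                   \<Longrightarrow> t \<ge> 0 \<Longrightarrow> V K k t \<noteq> V K j t"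
    and ode: "\<And>K k t. K \<ge> 1 \<Longrightarrow> k \<in> {1..2*K+1} \<Longrightarrow> t \<ge> 0 \<Longrightarrow>
       (V K k has_real_derivative
          (\<Sum>j\<in>{1..2*K+1} - {k}. 2 * (lam K k + lam K j) / (V K k t - V K j t))) (at t within {0..})"
  shows "\<exists>T0>0. M_tight T0 (\<lambda>n t. emp_measure (Suc n) (\<lambda>k. V (Suc n) k t))"
proof -
  have system: "particle_system (Suc n) (V (Suc n)) (x (Suc n))" for n
    by unfold_locales ((rule assms; simp) | simp)+
  have "M_tight 1 (\<lambda>n t. emp_measure (Suc n) (\<lambda>k. V (Suc n) k t))"
  proof (rule M_tight_if_levy_equicontinuous)
    show "real_distribution (emp_measure (Suc n) (\<lambda>k. V (Suc n) k t))" for n t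
      by (rule real_distribution_emp_measure) simp
    show "\<exists>\<delta>>0. \<forall>n. \<forall>s\<in>{0..1}. \<forall>t\<in>{0..1}. \<bar>s - t\<bar> < \<delta> \<longrightarrow>
        levy_close (cdf (emp_measure (Suc n) (\<lambda>k. V (Suc n) k s))) (cdf (emp_measure (Suc n) (\<lambda>k. V (Suc n) k t))) e"
      if "0 < e" for e
      using particle_system.levy_close_empirical[OF system _ _ that] that by (intro exI[of _ "e^3 / 24"]) auto
    show "\<exists>R. \<forall>n. \<forall>t\<in>{0..1}. cdf (emp_measure (Suc n) (\<lambda>k. V (Suc n) k t)) (- R) \<le> e \<and>
        1 - e \<le> cdf (emp_measure (Suc n) (\<lambda>k. V (Suc n) k t)) R"
      if "0 < e" for e
      using particle_system.empirical_tails[OF system that zero_less_one]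
      by (intro exI[of _ "3 + sqrt (24 * 1 / e)"]) auto
  qed simp
  then show ?thesis
    by (intro exI[of _ 1]) simp
qed

end
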